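(* Let $U\in\mathsf{U}(\mathcal{H}_A\otimes\mathcal{H}_B)$ and let $U=\sum_{i=1}^mc_iV_i\otimes W_i$ with $c_i>0$, $V_i\in\mathsf{U}(\mathcal{H}_A)$, $W_i\in\mathsf{U}(\mathcal{H}_B)$; set $\phi:=2\|c\|_1^2-\|c\|_2^2$. Let $E$ be an additional system, $X\in\mathsf{L}(\mathcal{H}_{ABE})$ a Hermitian observable, and $\rho\in\mathsf{D}(\mathcal{H}_{ABE})$. Run the random double Hadamard test circuit described in the context on $\rho$, and let $\boldsymbol{y}\in\mathrm{spec}(X)$ be the outcome of measuring $X$ on $ABE$ and $\boldsymbol{b}=\boldsymbol{b}_1\boldsymbol{b}_2\in\{0,1\}^2$ the outcome of measuring $R_AR_B$ in the computational basis. Then $\hat{\boldsymbol{\mu}}:=\phi\,(-1)^{\boldsymbol{g}+\boldsymbol{b}_1+\boldsymbol{b}_2}\boldsymbol{y}$ is an unbiased estimator of $\mu:=\mathrm{Tr}(XU_{AB}\rho_{ABE}U_{AB}^\dagger)$.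
   Context: Random setting: sample $(\boldsymbol{i},\boldsymbol{j},\boldsymbol{g})\in[m]^2\times\{0,1\}$ with probability $p(i,j,g)=0$ if $i=j$ and $g=1$, and $p(i,j,g)=c_ic_j/\phi$ otherwise. Given $(i,j,g)$, the circuit uses ancilla qubits $R_A,R_B$ initialized in $|0\rangle$: apply a Hadamard gate to each of $R_A,R_B$; if $g=1$ apply the phase gate $S=\mathrm{diag}(1,\mathrm{i})$ to each of $R_A,R_B$ (nothing if $g=0$); apply $|0\rangle\langle0|_{R_A}\otimes V_i+|1\rangle\langle1|_{R_A}\otimes V_j$ on $R_AA$ and $|0\rangle\langle0|_{R_B}\otimes W_i+|1\rangle\langle1|_{R_B}\otimes W_j$ on $R_BB$; apply a Hadamard gate to each of $R_A,R_B$; then measure $R_A,R_B$ in the computational basis and $ABE$ with respect to $X$ (identity acts on $E$ throughout). *)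

theory Defs
  imports "HOL-Analysis.Analysis"
begin

text \<open>Finite-dimensional operators: a system with orthonormal basis indexed by a finite
type 'n has operators complex^'n^'n.  Composite systems are indexed by product types.
Qubits are indexed by bool (False = |0>, True = |1>).\<close>

definition cadj :: "complex^'n^'m \<Rightarrow> complex^'m^'n" where
  "cadj M = (\<chi> i j. cnj (M $ j $ i))"

definition unitary_op :: "complex^'n^'n \<Rightarrow> bool" where
  "unitary_op M \<longleftrightarrow> cadj M ** M = mat 1 \<and> M ** cadj M = mat 1"

definition hermitian_op :: "complex^'n^'n \<Rightarrow> bool" where
  "hermitian_op M \<longleftrightarrow> cadj M = M"

definition ctrace :: "complex^'n^'n \<Rightarrow> complex" where
  "ctrace M = (\<Sum>i\<in>UNIV. M $ i $ i)"

definition psd_op :: "complex^'n^'n \<Rightarrow> bool" where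
  "psd_op M \<longleftrightarrow> (\<forall>v::complex^'n. let q = (\<Sum>i\<in>UNIV. \<Sum>j\<in>UNIV. cnj (v $ i) * M $ i $ j * v $ j)
                     in Im q = 0 \<and> Re q \<ge> 0)"

definition density_op :: "complex^'n^'n \<Rightarrow> bool" where
  "density_op M \<longleftrightarrow> hermitian_op M \<and> psd_op M \<and> ctrace M = 1"

definition kron :: "complex^'a^'a \<Rightarrow> complex^'b^'b \<Rightarrow> complex^('a\<times>'b)^('a\<times>'b)" where
  "kron M N = (\<chi> p q. M $ fst p $ fst q * N $ snd p $ snd q)"

definition basis_proj :: "'n \<Rightarrow> complex^'n^'n" where
  "basis_proj r = (\<chi> p q. if p = r \<and> q = r then 1 else 0)"

definition hadamard :: "complex^bool^bool" where
  "hadamard = (\<chi> a b. (if a \<and> b then -1 else 1) / complex_of_real (sqrt 2))"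

definition phase_S :: "complex^bool^bool" where
  "phase_S = (\<chi> a b. if a = b then (if a then \<i> else 1) else 0)"

text \<open>The circuit unitary of the random double Hadamard test for a given (i,j,g),
acting on R_A R_B (index type bool \<times> bool) tensor ABE.  The two controlled unitaries
|0><0|_{R_A} \<otimes> V_i + |1><1|_{R_A} \<otimes> V_j and |0><0|_{R_B} \<otimes> W_i + |1><1|_{R_B} \<otimes> W_j
(identity elsewhere) are written jointly.\<close>
definition dh_ctrl ::
  "complex^'a::finite^'a \<Rightarrow> complex^'a^'a \<Rightarrow> complex^'b^'b \<Rightarrow> complex^'b^'b
   \<Rightarrow> complex^((bool\<times>bool)\<times>(('a\<times>'b)\<times>'e::finite))^((bool\<times>bool)\<times>(('a\<times>'b)\<times>'e))" where
  "dh_ctrl Vi Vj Wi Wj =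
     (\<Sum>r\<in>UNIV. kron (basis_proj r)
        (kron (kron (if fst r then Vj else Vi) (if snd r then Wj else Wi)) (mat 1)))"

definition dh_circuit ::
  "complex^'a::finite^'a \<Rightarrow> complex^'a^'a \<Rightarrow> complex^'b^'b \<Rightarrow> complex^'b^'b \<Rightarrow> bool
   \<Rightarrow> complex^((bool\<times>bool)\<times>(('a\<times>'b)\<times>'e::finite))^((bool\<times>bool)\<times>(('a\<times>'b)\<times>'e))" where
  "dh_circuit Vi Vj Wi Wj g =
     kron (kron hadamard hadamard) (mat 1)
     ** dh_ctrl Vi Vj Wi Wj
     ** (if g then kron (kron phase_S phase_S) (mat 1) else mat 1)
     ** kron (kron hadamard hadamard) (mat 1)"

definition dh_output ::
  "complex^'a::finite^'a \<Rightarrow> complex^'a^'a \<Rightarrow> complex^'b^'b \<Rightarrow> complex^'b^'b \<Rightarrow> bool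
   \<Rightarrow> complex^(('a\<times>'b)\<times>'e::finite)^(('a\<times>'b)\<times>'e)
   \<Rightarrow> complex^((bool\<times>bool)\<times>(('a\<times>'b)\<times>'e))^((bool\<times>bool)\<times>(('a\<times>'b)\<times>'e))" where
  "dh_output Vi Vj Wi Wj g \<rho> =
     dh_circuit Vi Vj Wi Wj g ** kron (basis_proj (False, False)) \<rho>
       ** cadj (dh_circuit Vi Vj Wi Wj g)"

end

theory Submission
  imports Defs
begin

(*
  The product (-1)^(b1 + b2) y is the outcome of measuring Z (x) Z (x) X on the
  output, so its conditional mean is the trace of that observable against the output state.
  Splitting both controlled unitaries according to the control value r in {0,1}^2, the
  Z (x) Z measurement kills every pair of branches (r, r') except r' = complement of r. The
  phase gates multiply the pairs r = 00, 11 by (-1)^g and leave the two mixed pairs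
  (V_i (x) W_j against V_j (x) W_i) alone. Weighting by (-1)^g and p(i, j, g) therefore cancels
  the mixed pairs when i /= j, while for i = j (only g = 0 occurs) all four pairs coincide.
  Either way (i, j) contributes c_i c_j (Tr(X K_i rho K_j^dagger) + Tr(X K_j rho K_i^dagger)) / 2
  with K_i = V_i (x) W_i, and summing over i, j gives Tr(X U rho U^dagger). The normalisation
  phi is nonzero because phi >= (sum_i c_i)^2 > 0.

  The argument is purely linear: of the hypotheses on X and rho only X = sum_y y P_y is used,
  and unitarity of U only to exclude the empty decomposition m = 0.
*)

lemma matrix_mult_sum_left: "(\<Sum>x\<in>I. f x) ** B = (\<Sum>x\<in>I. f x ** B)"
  by (simp add: vec_eq_iff matrix_matrix_mult_def sum_distrib_right sum.swap[of _ I])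

lemma matrix_mult_sum_right: "A ** (\<Sum>x\<in>I. f x) = (\<Sum>x\<in>I. A ** f x)"
  by (simp add: vec_eq_iff matrix_matrix_mult_def sum_distrib_left sum.swap[of _ I])

lemma matrix_mult_scaleR_left:
  fixes A :: "'a::real_algebra_1^'n^'m"
  shows "(c *\<^sub>R A) ** B = c *\<^sub>R (A ** B)"
  by (simp add: vec_eq_iff matrix_matrix_mult_def scaleR_sum_right)

lemma matrix_mult_scaleR_right:
  fixes A :: "'a::real_algebra_1^'n^'m"
  shows "A ** (c *\<^sub>R B) = c *\<^sub>R (A ** B)"
  by (simp add: vec_eq_iff matrix_matrix_mult_def scaleR_sum_right)

lemma scaleR_matrix_entry: "(c *\<^sub>R (A::complex^'n^'m)) $ i $ j = of_real c * A $ i $ j"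
  by (simp only: vector_scaleR_component) (simp add: scaleR_conv_of_real)

lemma cadj_sum: "cadj (\<Sum>x\<in>I. f x) = (\<Sum>x\<in>I. cadj (f x))"
  by (simp add: cadj_def vec_eq_iff)

lemma cadj_scaleR: "cadj (c *\<^sub>R A) = c *\<^sub>R cadj A"
  by (simp add: cadj_def vec_eq_iff scaleR_matrix_entry)

lemma cadj_kron: "cadj (kron A B) = kron (cadj A) (cadj B)"
  by (simp add: cadj_def kron_def vec_eq_iff)

lemma ctrace_sum: "ctrace (\<Sum>x\<in>I. f x) = (\<Sum>x\<in>I. ctrace (f x))"
  by (simp add: ctrace_def sum.swap[of _ I])

lemma ctrace_scaleR: "ctrace (c *\<^sub>R A) = of_real c * ctrace A"
  unfolding ctrace_def
  by (simp add: scaleR_matrix_entry sum_distrib_left del: vector_scaleR_component)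

lemma ctrace_kron: "ctrace (kron A B) = ctrace A * ctrace B"
  by (simp add: ctrace_def kron_def sum_product sum.cartesian_product case_prod_beta)

lemma kron_mult: "kron A B ** kron C D = kron (A ** C) (B ** D)"
  by (simp add: vec_eq_iff kron_def matrix_matrix_mult_def sum_product sum.cartesian_product
      case_prod_beta mult_ac)

lemma kron_sum_left: "kron (\<Sum>x\<in>I. f x) B = (\<Sum>x\<in>I. kron (f x) B)"
  by (simp add: kron_def vec_eq_iff sum_distrib_right)

lemma kron_sum_right: "kron A (\<Sum>x\<in>I. f x) = (\<Sum>x\<in>I. kron A (f x))"
  by (simp add: kron_def vec_eq_iff sum_distrib_left)

lemma kron_scaleR_left: "kron (c *\<^sub>R A) B = c *\<^sub>R kron A B"
  by (simp add: kron_def vec_eq_iff scaleR_matrix_entry)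

lemma kron_scaleR_right: "kron A (c *\<^sub>R B) = c *\<^sub>R kron A B"
  by (simp add: kron_def vec_eq_iff scaleR_matrix_entry)

lemma kron_mat_1: "kron (mat 1) (mat 1) = mat 1"
  by (auto simp: kron_def mat_def vec_eq_iff prod_eq_iff)

lemma basis_proj_prod: "basis_proj r = kron (basis_proj (fst r)) (basis_proj (snd r))"
  by (auto simp: kron_def basis_proj_def vec_eq_iff prod_eq_iff)

lemma unitary_op_nonzero:
  fixes U :: "complex^'n^'n"
  assumes "unitary_op U"
  shows "U \<noteq> 0"
proof
  assume "U = 0"
  then have "(mat 1 :: complex^'n^'n) = 0"
    using assms by (simp add: unitary_op_def)
  then have "(mat 1 :: complex^'n^'n) $ i $ i = 0" for i
    by simp
  then show False
    by (simp add: mat_def)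
qed

lemma sum_power2_le_power2_sum:
  fixes f :: "'i \<Rightarrow> 'a::linordered_idom"
  assumes "\<And>i. i \<in> A \<Longrightarrow> 0 \<le> f i"
  shows "(\<Sum>i\<in>A. (f i)\<^sup>2) \<le> (\<Sum>i\<in>A. f i)\<^sup>2"
proof (cases "finite A")
  case True
  have "(\<Sum>i\<in>A. f i * f i) \<le> (\<Sum>i\<in>A. f i * (\<Sum>j\<in>A. f j))"
    using True assms by (intro sum_mono mult_left_mono member_le_sum) auto
  then show ?thesis by (simp add: power2_eq_square sum_distrib_right)
qed simp

lemma sum_sum_symmetrize:
  fixes T :: "'i \<Rightarrow> 'i \<Rightarrow> 'a::field_char_0"
  assumes "\<And>i j. w i j = w j i"
  shows "(\<Sum>i\<in>A. \<Sum>j\<in>A. w i j * (T i j + T j i) / 2) = (\<Sum>i\<in>A. \<Sum>j\<in>A. w i j * T i j)"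
proof -
  have "(\<Sum>i\<in>A. \<Sum>j\<in>A. w i j * T j i) = (\<Sum>i\<in>A. \<Sum>j\<in>A. w i j * T i j)"
    using assms by (subst sum.swap) simp
  then show ?thesis
    by (simp add: distrib_left add_divide_distrib sum.distrib flip: sum_divide_distrib)
qed

lemma ctrace_sandwich_sum:
  "ctrace (X ** (\<Sum>i\<in>A. c i *\<^sub>R K i) ** \<rho> ** cadj (\<Sum>j\<in>A. c j *\<^sub>R K j))
     = (\<Sum>i\<in>A. \<Sum>j\<in>A. of_real (c i * c j) * ctrace (X ** K i ** \<rho> ** cadj (K j)))"
  by (simp add: cadj_sum cadj_scaleR matrix_mult_sum_left matrix_mult_sum_right
      matrix_mult_scaleR_left matrix_mult_scaleR_right ctrace_sum ctrace_scaleR sum_distrib_left mult_ac)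
    (subst sum.swap, simp add: mult_ac)

lemma UNIV_bool_times_bool:
  "(UNIV :: (bool \<times> bool) set) = {(False, False), (False, True), (True, False), (True, True)}"
  by auto

definition pauli_Z :: "complex^bool^bool" where
  "pauli_Z = (\<chi> a b. if a = b then (if a then -1 else 1) else 0)"

(* The action on R_A (or R_B) of the circuit in the branch where the control qubit reads x. *)
definition hadamard_branch :: "bool \<Rightarrow> bool \<Rightarrow> complex^bool^bool" where
  "hadamard_branch g x = hadamard ** basis_proj x ** (if g then phase_S else mat 1) ** hadamard"

lemma hadamard_branch_entry:
  "hadamard_branch g x $ p $ q
     = (if g \<and> x then \<i> else 1) * (if p \<and> x then -1 else 1) * (if x \<and> q then -1 else 1) / 2"
proof -
  have "complex_of_real (sqrt 2) * complex_of_real (sqrt 2) = 2"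
    by (simp flip: of_real_mult)
  then show ?thesis
    unfolding hadamard_branch_def
    by (cases g; cases x; cases p; cases q;
        simp add: matrix_matrix_mult_def UNIV_bool hadamard_def basis_proj_def phase_S_def mat_def
          field_simps)
qed

(* Conjugating Z by the Hadamards turns it into a bit flip, so only x /= x' survives; the
   remaining factors are the phases that S^g puts on |1>. *)
lemma ctrace_pauli_Z_hadamard_branch:
  "ctrace (pauli_Z ** hadamard_branch g x ** basis_proj False ** cadj (hadamard_branch g x'))
     = (if x = x' then 0 else (if g \<and> x then \<i> else 1) * cnj (if g \<and> x' then \<i> else 1) / 2)"
  by (cases g; cases x; cases x';
      simp add: ctrace_def cadj_def matrix_matrix_mult_def UNIV_bool hadamard_branch_entry
        basis_proj_def pauli_Z_def field_simps)

definition ctrl_branch ::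
  "complex^'a::finite^'a \<Rightarrow> complex^'a^'a \<Rightarrow> complex^'b::finite^'b \<Rightarrow> complex^'b^'b
   \<Rightarrow> bool \<times> bool \<Rightarrow> complex^(('a\<times>'b)\<times>'e::finite)^(('a\<times>'b)\<times>'e)" where
  "ctrl_branch Vi Vj Wi Wj r =
     kron (kron (if fst r then Vj else Vi) (if snd r then Wj else Wi)) (mat 1)"

lemma dh_circuit_branches:
  "dh_circuit Vi Vj Wi Wj g =
     (\<Sum>r\<in>UNIV. kron (kron (hadamard_branch g (fst r)) (hadamard_branch g (snd r)))
                     (ctrl_branch Vi Vj Wi Wj r))"
proof -
  have "(mat 1 :: complex^((bool\<times>bool)\<times>(('a\<times>'b)\<times>'e::finite))^((bool\<times>bool)\<times>(('a\<times>'b)\<times>'e)))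
       = kron (kron (mat 1) (mat 1)) (mat 1)"
    by (simp add: kron_mat_1)
  then show ?thesis
    by (cases g; simp add: dh_circuit_def dh_ctrl_def ctrl_branch_def[symmetric] hadamard_branch_def
        matrix_mult_sum_left matrix_mult_sum_right kron_mult basis_proj_prod
        matrix_mul_assoc)
qed

lemma dh_output_branches:
  "dh_output Vi Vj Wi Wj g \<rho> =
     (\<Sum>r\<in>UNIV. \<Sum>r'\<in>UNIV.
        kron (kron (hadamard_branch g (fst r)) (hadamard_branch g (snd r))
                ** basis_proj (False, False)
                ** cadj (kron (hadamard_branch g (fst r')) (hadamard_branch g (snd r'))))
             (ctrl_branch Vi Vj Wi Wj r ** \<rho> ** cadj (ctrl_branch Vi Vj Wi Wj r')))"
  unfolding dh_output_def dh_circuit_branches cadj_sum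
  by (simp add: matrix_mult_sum_left matrix_mult_sum_right kron_mult cadj_kron) (rule sum.swap)

lemma ctrace_pauli_ZZ_dh_output:
  fixes Vi Vj :: "complex^'a::finite^'a" and Wi Wj :: "complex^'b::finite^'b"
    and Q \<rho> :: "complex^(('a\<times>'b)\<times>'e::finite)^(('a\<times>'b)\<times>'e)"
  defines "\<tau> \<equiv> \<lambda>r r'.
    ctrace (Q ** ctrl_branch Vi Vj Wi Wj r ** \<rho> ** cadj (ctrl_branch Vi Vj Wi Wj r'))"
  shows "ctrace (kron (kron pauli_Z pauli_Z) Q ** dh_output Vi Vj Wi Wj g \<rho>)
     = ((-1) ^ of_bool g * (\<tau> (False, False) (True, True) + \<tau> (True, True) (False, False))
         + \<tau> (False, True) (True, False) + \<tau> (True, False) (False, True)) / 4"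
    (is "_ = ?rhs")
proof -
  let ?Z = "\<lambda>x x'.
    ctrace (pauli_Z ** hadamard_branch g x ** basis_proj False ** cadj (hadamard_branch g x'))"
  have "ctrace (kron (kron pauli_Z pauli_Z) Q ** dh_output Vi Vj Wi Wj g \<rho>)
      = (\<Sum>r\<in>UNIV. \<Sum>r'\<in>UNIV. ?Z (fst r) (fst r') * ?Z (snd r) (snd r') * \<tau> r r')"
    by (simp add: dh_output_branches \<tau>_def matrix_mult_sum_right ctrace_sum kron_mult cadj_kron
        basis_proj_prod ctrace_kron matrix_mul_assoc)
  also have "\<dots> = ?rhs"
    by (cases g; simp add: UNIV_bool_times_bool ctrace_pauli_Z_hadamard_branch field_simps)
  finally show ?thesis .
qed

lemma sum_parity_basis_proj:
  "(\<Sum>b\<in>UNIV. ((-1) ^ (of_bool (fst b) + of_bool (snd b)) :: real) *\<^sub>R basis_proj b)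
     = kron pauli_Z pauli_Z"
  by (auto simp: UNIV_bool_times_bool vec_eq_iff scaleR_matrix_entry kron_def pauli_Z_def
      basis_proj_def)

lemma dh_estimator_conditional_mean:
  assumes "X = (\<Sum>y\<in>S. y *\<^sub>R P y)"
  shows "(\<Sum>b\<in>UNIV. \<Sum>y\<in>S. of_real q * ctrace (kron (basis_proj b) (P y) ** dh_output Vi Vj Wi Wj g \<rho>)
            * of_real (\<phi> * (-1) ^ (of_bool g + of_bool (fst b) + of_bool (snd b)) * y))
     = of_real (q * \<phi> * (-1) ^ of_bool g)
       * ctrace (kron (kron pauli_Z pauli_Z) X ** dh_output Vi Vj Wi Wj g \<rho>)"
proof -
  have "kron (kron pauli_Z pauli_Z) X
      = (\<Sum>b\<in>UNIV. \<Sum>y\<in>S.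
           ((-1) ^ (of_bool (fst b) + of_bool (snd b)) * y) *\<^sub>R kron (basis_proj b) (P y))"
    by (simp add: assms kron_sum_left kron_sum_right kron_scaleR_left kron_scaleR_right
        scaleR_sum_right flip: sum_parity_basis_proj)
      (subst sum.swap, simp add: mult.commute)
  then show ?thesis
    by (simp add: matrix_mult_sum_left matrix_mult_scaleR_left ctrace_sum ctrace_scaleR
        sum_distrib_left power_add mult_ac)
qed

lemma dh_estimator_pair_mean:
  fixes V :: "nat \<Rightarrow> complex^'a::finite^'a" and W :: "nat \<Rightarrow> complex^'b::finite^'b"
    and X \<rho> :: "complex^(('a\<times>'b)\<times>'e::finite)^(('a\<times>'b)\<times>'e)"
  assumes "\<phi> \<noteq> 0" and X: "X = (\<Sum>y\<in>S. y *\<^sub>R P y)"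
  defines "K \<equiv> \<lambda>k. kron (kron (V k) (W k)) (mat 1) :: complex^(('a\<times>'b)\<times>'e)^(('a\<times>'b)\<times>'e)"
  shows "(\<Sum>g\<in>UNIV. \<Sum>b\<in>UNIV. \<Sum>y\<in>S. of_real (if i = j \<and> g then 0 else c i * c j / \<phi>)
            * ctrace (kron (basis_proj b) (P y) ** dh_output (V i) (V j) (W i) (W j) g \<rho>)
            * of_real (\<phi> * (-1) ^ (of_bool g + of_bool (fst b) + of_bool (snd b)) * y))
     = of_real (c i * c j)
       * (ctrace (X ** K i ** \<rho> ** cadj (K j)) + ctrace (X ** K j ** \<rho> ** cadj (K i))) / 2"
    (is "?lhs = _")
proof -
  let ?M = "ctrl_branch (V i) (V j) (W i) (W j) :: _ \<Rightarrow> complex^(('a\<times>'b)\<times>'e)^(('a\<times>'b)\<times>'e)"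
  let ?\<tau> = "\<lambda>r r'. ctrace (X ** ?M r ** \<rho> ** cadj (?M r'))"
  have "?lhs = (\<Sum>g\<in>UNIV. of_real ((if i = j \<and> g then 0 else c i * c j / \<phi>) * \<phi> * (-1) ^ of_bool g)
           * (((-1) ^ of_bool g * (?\<tau> (False, False) (True, True) + ?\<tau> (True, True) (False, False))
               + ?\<tau> (False, True) (True, False) + ?\<tau> (True, False) (False, True)) / 4))"
    by (simp only: dh_estimator_conditional_mean[OF X] ctrace_pauli_ZZ_dh_output)
  also have "\<dots> = of_real (c i * c j)
      * (?\<tau> (False, False) (True, True) + ?\<tau> (True, True) (False, False)) / 2"
  proof (cases "i = j")
    case True
    then show ?thesis
      using \<open>\<phi> \<noteq> 0\<close> by (simp add: ctrl_branch_def UNIV_bool field_simps)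
  next
    case False
    then show ?thesis
      using \<open>\<phi> \<noteq> 0\<close> by (simp add: UNIV_bool field_simps)
  qed
  finally show ?thesis
    by (simp add: K_def ctrl_branch_def)
qed

theorem lemma5:
  fixes U :: "complex^('a::finite\<times>'b::finite)^('a\<times>'b)"
    and m :: nat and c :: "nat \<Rightarrow> real"
    and V :: "nat \<Rightarrow> complex^'a^'a" and W :: "nat \<Rightarrow> complex^'b^'b"
    and X :: "complex^(('a\<times>'b)\<times>'e::finite)^(('a\<times>'b)\<times>'e)"
    and \<rho> :: "complex^(('a\<times>'b)\<times>'e)^(('a\<times>'b)\<times>'e)"
    and \<phi> :: real
    and p :: "nat \<Rightarrow> nat \<Rightarrow> bool \<Rightarrow> real"
    and S :: "real set" and P :: "real \<Rightarrow> complex^(('a\<times>'b)\<times>'e)^(('a\<times>'b)\<times>'e)"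
  assumes U_unitary: "unitary_op U"
    and decomp: "U = (\<Sum>i<m. (c i) *\<^sub>R kron (V i) (W i))"
    and c_pos: "\<And>i. i < m \<Longrightarrow> c i > 0"
    and V_unitary: "\<And>i. i < m \<Longrightarrow> unitary_op (V i)"
    and W_unitary: "\<And>i. i < m \<Longrightarrow> unitary_op (W i)"
    and phi_def: "\<phi> = 2 * (\<Sum>i<m. c i)\<^sup>2 - (\<Sum>i<m. (c i)\<^sup>2)"
    and p_def: "\<And>i j g. p i j g = (if i = j \<and> g then 0 else c i * c j / \<phi>)"
    and X_herm: "hermitian_op X"
    and rho_density: "density_op \<rho>"
    \<comment> \<open>(S, P) is the spectral decomposition of X: S = spec(X), P y the eigenprojector\<close>
    and S_finite: "finite S"
    and P_herm: "\<And>y. y \<in> S \<Longrightarrow> hermitian_op (P y)"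
    and P_idem: "\<And>y. y \<in> S \<Longrightarrow> P y ** P y = P y"
    and P_nonzero: "\<And>y. y \<in> S \<Longrightarrow> P y \<noteq> 0"
    and P_orth: "\<And>y y'. y \<in> S \<Longrightarrow> y' \<in> S \<Longrightarrow> y \<noteq> y' \<Longrightarrow> P y ** P y' = 0"
    and P_complete: "(\<Sum>y\<in>S. P y) = mat 1"
    and X_spectral: "X = (\<Sum>y\<in>S. y *\<^sub>R P y)"
  shows "(\<Sum>i<m. \<Sum>j<m. \<Sum>g\<in>UNIV. \<Sum>b\<in>(UNIV::(bool\<times>bool) set). \<Sum>y\<in>S.
            complex_of_real (p i j g)
            * ctrace (kron (basis_proj b) (P y) ** dh_output (V i) (V j) (W i) (W j) g \<rho>)
            * complex_of_real (\<phi> * (-1) ^ (of_bool g + of_bool (fst b) + of_bool (snd b)) * y))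
         = ctrace (X ** kron U (mat 1) ** \<rho> ** cadj (kron U (mat 1)))"
proof -
  have "m > 0"
    using unitary_op_nonzero[OF U_unitary] decomp by (cases m) auto
  then have "(\<Sum>i<m. c i) > 0"
    using c_pos by (intro sum_pos) auto
  moreover have "(\<Sum>i<m. (c i)\<^sup>2) \<le> (\<Sum>i<m. c i)\<^sup>2"
    using c_pos by (intro sum_power2_le_power2_sum) (simp add: less_imp_le)
  ultimately have "\<phi> \<noteq> 0"
    unfolding phi_def by (smt (verit) zero_less_power)
  define K where
    "K k = (kron (kron (V k) (W k)) (mat 1) :: complex^(('a\<times>'b)\<times>'e)^(('a\<times>'b)\<times>'e))" for k
  have "kron U (mat 1) = (\<Sum>i<m. c i *\<^sub>R K i)"
    by (simp add: decomp K_def kron_sum_left kron_scaleR_left)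
  then have "ctrace (X ** kron U (mat 1) ** \<rho> ** cadj (kron U (mat 1)))
      = (\<Sum>i<m. \<Sum>j<m. of_real (c i * c j) * ctrace (X ** K i ** \<rho> ** cadj (K j)))"
    by (simp only: ctrace_sandwich_sum)
  also have "\<dots> = (\<Sum>i<m. \<Sum>j<m. of_real (c i * c j)
      * (ctrace (X ** K i ** \<rho> ** cadj (K j)) + ctrace (X ** K j ** \<rho> ** cadj (K i))) / 2)"
    by (rule sum_sum_symmetrize[symmetric]) (simp add: mult.commute)
  finally show ?thesis
    by (simp only: p_def K_def dh_estimator_pair_mean[OF \<open>\<phi> \<noteq> 0\<close> X_spectral])
qed

end
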